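(* Let $N\ge1$, $n,m\ge1$, and let $\mathbf A_i,\mathbf Q_i\in\mathbb R^{n\times n}$, $\mathbf B_i\in\mathbb R^{n\times m}$, $\mathbf S_i\in\mathbb R^{n\times m}$, $\mathbf R_i\in\mathbb R^{m\times m}$ ($1\le i\le N$) and $\mathbf T\in\mathbb R^{n\times n}$, with $\mathbf Q_i,\mathbf R_i,\mathbf T$ symmetric. Assume: (i) there is $\alpha>0$ such that the smallest eigenvalues of $\mathbf T$ and of each $\begin{pmatrix}\mathbf Q_i&\mathbf S_i\\ \mathbf S_i^{\mathsf T}&\mathbf R_i\end{pmatrix}$ exceed $\alpha$; (ii) $\|\mathbf A_i\|_\infty\le1/4$ and $\|\mathbf A_i^{\mathsf T}\|_\infty\le 1/4$ for all $i$; (iii) $\mathbf D_{1:N}$ is invertible with $\|\mathbf D_{1:N}^{-1}\|_\infty\le2$. Then the linear map $\nabla\mathcal T^*$ defined below is invertible.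
   Context: $-1<\tau_1<\dots<\tau_N<1$ are the $N$ Gauss abscissas (roots of the degree-$N$ Legendre polynomial), $\omega_1,\dots,\omega_N>0$ the Gauss weights, $\tau_0=-1$. $D_{ij}=\dot L_j(\tau_i)$ ($1\le i\le N$, $0\le j\le N$) with $L_j(\tau)=\prod_{k=0,k\ne j}^N\frac{\tau-\tau_k}{\tau_j-\tau_k}$, $\mathbf D_{1:N}=(D_{ij})_{1\le i,j\le N}$; $D^\dagger_{ij}=-(\omega_j/\omega_i)D_{ji}$ for $1\le i,j\le N$ and $D^\dagger_{i,N+1}=-\sum_{j=1}^ND^\dagger_{ij}$. Matrix $\|\cdot\|_\infty$ is the largest absolute row sum. (In the paper these matrices are $\mathbf A_i=\nabla_x\mathbf f$, $\mathbf B_i=\nabla_u\mathbf f$, $\mathbf Q_i=\nabla_{xx}H$, $\mathbf S_i=\nabla_{ux}H$, $\mathbf R_i=\nabla_{uu}H$ evaluated along an optimal solution at $\tau_i$, and $\mathbf T=\nabla^2C(\mathbf x^*(1))$.) The map $\nabla\mathcal T^*$ sends $(\mathbf X_1,\dots,\mathbf X_{N+1},\mathbf U_1,\dots,\mathbf U_N,\boldsymbol\Lambda_1,\dots,\boldsymbol\Lambda_{N+1})$ (blocks in $\mathbb R^n,\mathbb R^m,\mathbb R^n$) to the vector with components: $\sum_{j=1}^ND_{ij}\mathbf X_j-\mathbf A_i\mathbf X_i-\mathbf B_i\mathbf U_i$ ($1\le i\le N$); $\mathbf X_{N+1}-\sum_{j=1}^N\omega_j(\mathbf A_j\mathbf X_j+\mathbf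 B_j\mathbf U_j)$; $\sum_{j=1}^{N+1}D^\dagger_{ij}\boldsymbol\Lambda_j+\mathbf A_i^{\mathsf T}\boldsymbol\Lambda_i+\mathbf Q_i\mathbf X_i+\mathbf S_i\mathbf U_i$ ($1\le i\le N$); $\boldsymbol\Lambda_{N+1}-\mathbf T\mathbf X_{N+1}$; $\mathbf S_i^{\mathsf T}\mathbf X_i+\mathbf R_i\mathbf U_i+\mathbf B_i^{\mathsf T}\boldsymbol\Lambda_i$ ($1\le i\le N$). *)

theory Defs
  imports "HOL-Analysis.Analysis" "HOL-Computational_Algebra.Polynomial"
begin

fun legendre :: "nat \<Rightarrow> real poly" where
  "legendre 0 = 1"
| "legendre (Suc 0) = [:0, 1:]"
| "legendre (Suc (Suc k)) =
     smult (1 / real (k + 2))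
       (smult (real (2 * k + 3)) ([:0, 1:] * legendre (Suc k)) - smult (real (k + 1)) (legendre k))"

definition gauss_tau :: "nat \<Rightarrow> nat \<Rightarrow> real" where
  "gauss_tau N i = (if i = 0 then -1
     else sorted_list_of_set {x. poly (legendre N) x = 0} ! (i - 1))"

definition lagrange_basis :: "nat \<Rightarrow> nat set \<Rightarrow> nat \<Rightarrow> real poly" where
  "lagrange_basis N K j =
     (\<Prod>k\<in>K - {j}. smult (1 / (gauss_tau N j - gauss_tau N k)) [:- gauss_tau N k, 1:])"

definition gauss_weight :: "nat \<Rightarrow> nat \<Rightarrow> real" where
  "gauss_weight N i = integral {-1..1} (\<lambda>t. poly (lagrange_basis N {1..N} i) t)"

definition Dmat :: "nat \<Rightarrow> nat \<Rightarrow> nat \<Rightarrow> real" where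
  "Dmat N i j = poly (pderiv (lagrange_basis N {0..N} j)) (gauss_tau N i)"

definition Ddag :: "nat \<Rightarrow> nat \<Rightarrow> nat \<Rightarrow> real" where
  "Ddag N i j = (if j = N + 1
      then - (\<Sum>l=1..N. - (gauss_weight N l / gauss_weight N i) * Dmat N l i)
      else - (gauss_weight N j / gauss_weight N i) * Dmat N j i)"

definition inf_norm :: "real^'c^'r \<Rightarrow> real" where
  "inf_norm M = Max (range (\<lambda>i. \<Sum>j\<in>UNIV. \<bar>M $ i $ j\<bar>))"

definition is_eigenvalue :: "real^'n^'n \<Rightarrow> real \<Rightarrow> bool" where
  "is_eigenvalue M \<mu> \<longleftrightarrow> (\<exists>v. v \<noteq> 0 \<and> M *v v = \<mu> *\<^sub>R v)"

definition block_QSR :: "real^'n^'n \<Rightarrow> real^'m^'n \<Rightarrow> real^'m^'m \<Rightarrow> real^('n + 'm)^('n + 'm)" where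
  "block_QSR Q S R = (\<chi> i j. case (i, j) of
       (Inl a, Inl b) \<Rightarrow> Q $ a $ b
     | (Inl a, Inr b) \<Rightarrow> S $ a $ b
     | (Inr a, Inl b) \<Rightarrow> S $ b $ a
     | (Inr a, Inr b) \<Rightarrow> R $ a $ b)"

type_synonym ('n, 'm) kkt_vec = "(nat \<Rightarrow> real^'n) \<times> (nat \<Rightarrow> real^'m) \<times> (nat \<Rightarrow> real^'n)"

definition kkt_space :: "nat \<Rightarrow> ('n::finite, 'm::finite) kkt_vec set" where
  "kkt_space N = {(X, U, L). (\<forall>i. i \<notin> {1..N+1} \<longrightarrow> X i = 0)
                            \<and> (\<forall>i. i \<notin> {1..N} \<longrightarrow> U i = 0)
                            \<and> (\<forall>i. i \<notin> {1..N+1} \<longrightarrow> L i = 0)}"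

text \<open>Output: first component holds the N dynamics blocks and the (N+1)-th (quadrature) block,
  third component the N costate blocks and the terminal block, second the N control blocks.\<close>
definition gradT :: "nat \<Rightarrow> (nat \<Rightarrow> real^'n::finite^'n) \<Rightarrow> (nat \<Rightarrow> real^'m^'n) \<Rightarrow> (nat \<Rightarrow> real^'n^'n)
   \<Rightarrow> (nat \<Rightarrow> real^'m^'n) \<Rightarrow> (nat \<Rightarrow> real^'m^'m) \<Rightarrow> real^'n^'n
   \<Rightarrow> ('n, 'm) kkt_vec \<Rightarrow> ('n, 'm) kkt_vec" where
  "gradT N A B Q S R T = (\<lambda>(X, U, L).
     ((\<lambda>i. if 1 \<le> i \<and> i \<le> N then
              (\<Sum>j=1..N. Dmat N i j *\<^sub>R X j) - A i *v X i - B i *v U i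
           else if i = N + 1 then
              X (N + 1) - (\<Sum>j=1..N. gauss_weight N j *\<^sub>R (A j *v X j + B j *v U j))
           else 0),
      (\<lambda>i. if 1 \<le> i \<and> i \<le> N then
              transpose (S i) *v X i + R i *v U i + transpose (B i) *v L i
           else 0),
      (\<lambda>i. if 1 \<le> i \<and> i \<le> N then
              (\<Sum>j=1..N+1. Ddag N i j *\<^sub>R L j) + transpose (A i) *v L i + Q i *v X i + S i *v U i
           else if i = N + 1 then
              L (N + 1) - T *v X (N + 1)
           else 0)))"

end

theory Submission
  imports Defs "HOL-Library.Function_Algebras"
begin

text \<open>Suppose \<open>\<nabla>\<T>\<^sup>*(X, U, \<Lambda>) = 0\<close>. Pair the costate equations with \<open>\<omega>\<^sub>i X\<^sub>i\<close> and the control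
  equations with \<open>\<omega>\<^sub>i U\<^sub>i\<close>. Because \<open>\<omega>\<^sub>i D\<^sup>\<dagger>\<^sub>i\<^sub>j = -\<omega>\<^sub>j D\<^sub>j\<^sub>i\<close>, the terms with \<open>D\<^sup>\<dagger>\<close> are a discrete
  integration by parts of the dynamics, and what remains is the energy identity
  \<open>\<Sum>\<^sub>i \<omega>\<^sub>i (X\<^sub>i, U\<^sub>i)\<^sup>T H\<^sub>i (X\<^sub>i, U\<^sub>i) + X\<^sub>N\<^sub>+\<^sub>1\<^sup>T T X\<^sub>N\<^sub>+\<^sub>1 = 0\<close> with \<open>H\<^sub>i = [Q\<^sub>i S\<^sub>i; S\<^sub>i\<^sup>T R\<^sub>i]\<close>.
  The Gauss weights \<open>\<omega>\<^sub>i = \<integral> L\<^sub>i\<^sup>2\<close> are positive and the \<open>H\<^sub>i\<close> are positive definite, so \<open>X = U = 0\<close>. The costate equations then say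
  \<open>\<omega>\<^sub>k \<Lambda>\<^sub>k = \<Sum>\<^sub>i E\<^sub>i\<^sub>k A\<^sub>i\<^sup>T \<omega>\<^sub>i \<Lambda>\<^sub>i\<close> with \<open>E = D\<^sub>1\<^sub>:\<^sub>N\<^sup>-\<^sup>1\<close>, a contraction for the \<open>\<ell>\<^sup>1\<close> norm of the
  stacked costates since \<open>\<parallel>E\<parallel>\<^sub>\<infinity> \<le> 2\<close> and \<open>\<parallel>A\<^sub>i\<parallel>\<^sub>\<infinity> \<le> 1/4\<close>; hence \<open>\<Lambda> = 0\<close>. Finally, an injective
  linear endomorphism of the finite-dimensional space of block vectors is bijective.\<close>

section \<open>Legendre polynomials and Gauss weights\<close>

lemma legendre_leading_coeff: "coeff (legendre n) n > 0 \<and> (\<forall>k>n. coeff (legendre n) k = 0)"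
proof (induction n rule: legendre.induct)
  case 1
  then show ?case by simp
next
  case 2
  then show ?case by (simp add: coeff_pCons split: nat.splits)
next
  case (3 n)
  have coeff_rec: "coeff (legendre (Suc (Suc n))) j =
     (real (2*n+3) * coeff (pCons 0 (legendre (Suc n))) j - real (n+1) * coeff (legendre n) j) / real (n+2)"
    for j
    by (cases j) (simp_all add: field_simps)
  show ?case
  proof (intro conjI allI impI)
    show "coeff (legendre (Suc (Suc n))) (Suc (Suc n)) > 0"
      unfolding coeff_rec using 3 by (simp add: coeff_pCons)
  next
    fix j assume "j > Suc (Suc n)"
    then obtain j' where "j = Suc j'" "j' > Suc n" by (cases j) auto
    then show "coeff (legendre (Suc (Suc n))) j = 0"
      unfolding coeff_rec using 3 by (simp add: coeff_pCons)
  qed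
qed

lemma degree_legendre [simp]: "degree (legendre n) = n"
  using legendre_leading_coeff[of n] by (intro antisym degree_le le_degree) auto

lemma legendre_nonzero [simp]: "legendre n \<noteq> 0"
  using legendre_leading_coeff[of n] by auto

lemma poly_legendre_Suc_Suc:
  "poly (legendre (Suc (Suc n))) x =
     (real (2*n+3) * (x * poly (legendre (Suc n)) x) - real (n+1) * poly (legendre n) x) / real (n+2)"
  by (simp add: field_simps)

lemma integral_power_minus1_1: "integral {-1..1} (\<lambda>x::real. x ^ k) = (1 - (-1) ^ Suc k) / real (Suc k)"
proof -
  have "((\<lambda>x::real. x ^ k) has_integral (1 ^ Suc k / real (Suc k) - (-1) ^ Suc k / real (Suc k))) {-1..1}"
  proof (rule fundamental_theorem_of_calculus)
    fix x :: real
    have "((\<lambda>x. x ^ Suc k / real (Suc k)) has_real_derivative x ^ k) (at x)"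
      using DERIV_cdivide[OF DERIV_pow[of "Suc k" x], of "real (Suc k)"] by simp
    then show "((\<lambda>x. x ^ Suc k / real (Suc k)) has_vector_derivative x ^ k) (at x within {-1..1})"
      by (simp add: has_real_derivative_iff_has_vector_derivative has_vector_derivative_at_within)
  qed simp
  then show ?thesis by (simp add: integral_unique add_divide_distrib)
qed

definition legendre_moment :: "nat \<Rightarrow> nat \<Rightarrow> real" where
  "legendre_moment n k = integral {-1..1} (\<lambda>x. poly (legendre n) x * x ^ k)"

lemma legendre_moment_0: "legendre_moment 0 k = (1 - (-1) ^ Suc k) / real (Suc k)"
  by (simp add: legendre_moment_def integral_power_minus1_1)

lemma legendre_moment_1: "legendre_moment (Suc 0) k = (1 - (-1) ^ k) / real (k + 2)"
  using integral_power_minus1_1[of "Suc k"] by (simp add: legendre_moment_def)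

lemma legendre_moment_Suc_Suc:
  "legendre_moment (Suc (Suc n)) k =
     (real (2*n+3) * legendre_moment (Suc n) (Suc k) - real (n+1) * legendre_moment n k) / real (n+2)"
proof -
  have "(\<lambda>x. poly (legendre (Suc (Suc n))) x * x ^ k) =
     (\<lambda>x. (real (2*n+3) * (poly (legendre (Suc n)) x * x ^ Suc k)
           - real (n+1) * (poly (legendre n) x * x ^ k)) / real (n+2))"
    by (simp add: poly_legendre_Suc_Suc field_simps)
  then show ?thesis
    unfolding legendre_moment_def
    by (simp add: integral_divide integral_diff integral_mult_right integrable_continuous_interval
        continuous_intros)
qed

lemma legendre_moment_shift:
  "real (k + n + 3) * legendre_moment (Suc n) (Suc k) = real (Suc k) * legendre_moment n k"
proof (induction n arbitrary: k rule: legendre.induct)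
  case 1
  show ?case by (simp add: legendre_moment_0 legendre_moment_1 field_simps)
next
  case 2
  define c :: real where "c = 1 - (-1) ^ k"
  have "legendre_moment (Suc (Suc 0)) (Suc k) = (3 * (c / real (k + 4)) - c / real (k + 2)) / 2"
    using legendre_moment_Suc_Suc[of 0 "Suc k"] by (simp add: legendre_moment_0 legendre_moment_1 c_def)
  moreover have "legendre_moment (Suc 0) k = c / real (k + 2)"
    by (simp add: legendre_moment_1 c_def)
  ultimately show ?case
    by (simp only:) (simp add: divide_simps, simp add: algebra_simps)
next
  case (3 n)
  let ?m = legendre_moment and ?a = "legendre_moment (Suc n) (Suc k)"
  have "?m (Suc (Suc n)) (Suc (Suc k)) = real (k + 2) * ?a / real (k + n + 5)"
    using "3.IH"(1)[of "Suc k"] by (simp add: eq_divide_eq algebra_simps)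
  then have m3: "?m (Suc (Suc (Suc n))) (Suc k)
      = (real (2*n+5) * (real (k + 2) * ?a / real (k + n + 5)) - real (n+2) * ?a) / real (n+3)"
    using legendre_moment_Suc_Suc[of "Suc n" "Suc k"] by (simp add: ac_simps)
  have lhs: "real (k + n + 5) * ?m (Suc (Suc (Suc n))) (Suc k) = (real k - real n) * ?a"
    unfolding m3 by (simp add: divide_simps) (simp add: algebra_simps)
  have "?m n k = real (k + n + 3) * ?a / real (Suc k)"
    using "3.IH"(2)[of k] by (simp add: eq_divide_eq algebra_simps)
  then have m2: "?m (Suc (Suc n)) k
      = (real (2*n+3) * ?a - real (n+1) * (real (k + n + 3) * ?a / real (Suc k))) / real (n+2)"
    using legendre_moment_Suc_Suc[of n k] by (simp add: ac_simps)
  have rhs: "real (Suc k) * ?m (Suc (Suc n)) k = (real k - real n) * ?a"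
    unfolding m2 by (simp add: divide_simps) (simp add: algebra_simps)
  show ?case using lhs rhs by (simp add: add.commute add.left_commute)
qed

lemma legendre_moment_Suc_Suc_0:
  "legendre_moment (Suc (Suc n)) 0 = - (real n / real (n + 3)) * legendre_moment n 0"
proof -
  have m1: "legendre_moment (Suc n) (Suc 0) = legendre_moment n 0 / real (n + 3)"
    using legendre_moment_shift[of 0 n] by (simp add: eq_divide_eq ac_simps)
  show ?thesis
    unfolding legendre_moment_Suc_Suc[of n 0] m1 by (simp add: divide_simps) (simp add: algebra_simps)
qed

lemma legendre_moment_Suc_0: "legendre_moment (Suc n) 0 = 0"
  by (induction n rule: legendre.induct) (simp_all add: legendre_moment_1 legendre_moment_Suc_Suc_0)

lemma legendre_moment_eq_0: "k < n \<Longrightarrow> legendre_moment n k = 0"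
proof (induction k arbitrary: n)
  case 0
  then show ?case by (cases n) (simp_all add: legendre_moment_Suc_0)
next
  case (Suc k)
  then obtain n' where "n = Suc n'" "k < n'" by (cases n) auto
  with Suc.IH legendre_moment_shift[of k n'] show ?case by simp
qed

lemma legendre_orthogonal:
  assumes "degree q < n"
  shows "integral {-1..1} (\<lambda>x. poly (legendre n) x * poly q x) = 0"
proof -
  have "integral {-1..1} (\<lambda>x. poly (legendre n) x * poly q x)
      = integral {-1..1} (\<lambda>x. \<Sum>i\<le>degree q. coeff q i * (poly (legendre n) x * x ^ i))"
    by (simp add: poly_altdef[of q] sum_distrib_left mult_ac)
  also have "\<dots> = (\<Sum>i\<le>degree q. coeff q i * legendre_moment n i)"
    by (subst integral_sum)
      (auto simp: legendre_moment_def intro!: integrable_continuous_interval continuous_intros)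
  also have "\<dots> = 0"
    using assms by (auto intro!: sum.neutral legendre_moment_eq_0)
  finally show ?thesis .
qed

lemma poly_sign_const_if_no_roots:
  fixes f :: "real poly"
  assumes "\<forall>x\<in>{a<..<b}. poly f x \<noteq> 0"
  shows "(\<forall>x\<in>{a<..<b}. poly f x \<ge> 0) \<or> (\<forall>x\<in>{a<..<b}. poly f x \<le> 0)"
proof (rule ccontr)
  assume "\<not> ?thesis"
  then obtain u v where u: "u \<in> {a<..<b}" "poly f u < 0" and v: "v \<in> {a<..<b}" "poly f v > 0"
    by (auto simp: not_le)
  have "\<exists>x. min u v < x \<and> x < max u v \<and> poly f x = 0"
  proof (cases "u < v")
    case True
    then show ?thesis using poly_IVT_pos[of u v f] u v by auto
  next
    case False
    then have "v < u" using u v by (cases "u = v") auto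
    then show ?thesis using poly_IVT_neg[of v u f] u v by auto
  qed
  then show False using assms u v by fastforce
qed

lemma poly_factor_out_root:
  assumes "f \<noteq> 0"
  obtains g where "f = [:-r,1:] ^ order r f * g" and "poly g r \<noteq> 0"
    and "\<And>x. x \<noteq> r \<Longrightarrow> order x g = order x f"
proof -
  obtain g where g: "f = [:-r,1:] ^ order r f * g" using order_1[of r f] by (auto elim!: dvdE)
  have order_f: "order x f = order x ([:-r,1:] ^ order r f) + order x g" for x
    using order_mult[of "[:-r,1:] ^ order r f" g x] g assms by simp
  have "g \<noteq> 0" using g assms by auto
  then have "poly g r \<noteq> 0"
    using order_f[of r] by (simp add: order_power_n_n order_root)
  moreover have "order x g = order x f" if "x \<noteq> r" for x
    using order_f[of x] that by (simp add: order_0I)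
  ultimately show ?thesis using that g by blast
qed

lemma poly_sign_const_if_even_order_roots:
  fixes f :: "real poly"
  assumes "f \<noteq> 0" and "\<forall>r\<in>{a<..<b}. poly f r = 0 \<longrightarrow> even (order r f)"
  shows "(\<forall>x\<in>{a<..<b}. poly f x \<ge> 0) \<or> (\<forall>x\<in>{a<..<b}. poly f x \<le> 0)"
  using assms
proof (induction "card {r\<in>{a<..<b}. poly f r = 0}" arbitrary: f rule: less_induct)
  case less
  let ?roots = "\<lambda>f. {r\<in>{a<..<b}. poly f r = 0}"
  show ?case
  proof (cases "?roots f = {}")
    case True
    then show ?thesis by (intro poly_sign_const_if_no_roots) auto
  next
    case False
    then obtain r where r: "r \<in> {a<..<b}" "poly f r = 0" by auto
    then obtain k where k: "order r f = 2 * k" using less.prems(2) by (blast elim: evenE)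
    obtain g where g: "f = [:-r,1:] ^ (2 * k) * g" and gr: "poly g r \<noteq> 0"
      and order_g: "\<And>x. x \<noteq> r \<Longrightarrow> order x g = order x f"
      using poly_factor_out_root[OF less.prems(1), of r] k by metis
    have "g \<noteq> 0" using gr by auto
    have fin: "finite (?roots f)"
      using poly_roots_finite[OF less.prems(1)] by (rule finite_subset[rotated]) auto
    have "?roots g \<subseteq> ?roots f - {r}" using gr g by auto
    then have "card (?roots g) \<le> card (?roots f - {r})" using fin by (intro card_mono) auto
    also have "\<dots> < card (?roots f)" using fin r by (intro card_Diff1_less) auto
    finally have "card (?roots g) < card (?roots f)" .
    moreover have "\<forall>x\<in>{a<..<b}. poly g x = 0 \<longrightarrow> even (order x g)"
    proof (intro ballI impI)
      fix x assume x: "x \<in> {a<..<b}" "poly g x = 0"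
      then have "x \<noteq> r" using gr by auto
      with x show "even (order x g)" using less.prems(2) order_g g by simp
    qed
    ultimately have "(\<forall>x\<in>{a<..<b}. poly g x \<ge> 0) \<or> (\<forall>x\<in>{a<..<b}. poly g x \<le> 0)"
      using less.hyps \<open>g \<noteq> 0\<close> by blast
    moreover have "poly f x = ((x - r) ^ k) ^ 2 * poly g x" for x
      using g by (simp add: power_mult mult.commute)
    ultimately show ?thesis
      by (metis mult_nonneg_nonneg mult_nonneg_nonpos zero_le_power2)
  qed
qed

lemma order_prod_linear_factors:
  fixes Z :: "'a::idom set"
  assumes "finite Z"
  shows "order r (\<Prod>z\<in>Z. [:-z,1:]) = (if r \<in> Z then 1 else 0)"
proof (cases "r \<in> Z")
  case True
  let ?P = "\<Prod>z\<in>Z-{r}. [:-z,1:]"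
  have split: "(\<Prod>z\<in>Z. [:-z,1:]) = [:-r,1:] * ?P"
    using assms True by (simp add: prod.remove)
  have "poly ?P r \<noteq> 0" using assms by (simp add: poly_prod)
  then have "order r ?P = 0" by (rule order_0I)
  moreover have "?P \<noteq> 0" using assms by simp
  then have "[:-r,1:] * ?P \<noteq> 0" by (metis mult_eq_0_iff pCons_eq_0_iff one_neq_zero)
  ultimately show ?thesis
    unfolding split using True order_mult[of "[:-r,1:]" ?P r] order_power_n_n[of r 1] by simp
next
  case False
  then have "poly (\<Prod>z\<in>Z. [:-z,1:]) r \<noteq> 0" using assms by (simp add: poly_prod)
  then show ?thesis using False order_0I by auto
qed

lemma continuous_on_poly_fun [continuous_intros]:
  fixes p :: "'a::real_normed_field poly"
  shows "continuous_on S (poly p)"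
  using continuous_on_poly[OF continuous_on_id] by simp

lemma poly_eq_0_if_nonneg_integral_eq_0:
  fixes p :: "real poly"
  assumes "a < b" and "\<forall>x\<in>{a<..<b}. poly p x \<ge> 0" and "integral {a..b} (poly p) = 0"
  shows "p = 0"
proof (rule ccontr)
  assume "p \<noteq> 0"
  have cont: "continuous_on {a..b} (poly p)" by (rule continuous_on_poly_fun)
  then have "(poly p has_integral 0) {a..b}"
    using assms(3) integrable_integral[OF integrable_continuous_interval] by metis
  then have "poly p x = 0" if "x \<in> {a..b}" for x
    using has_integral_0_cbox_imp_0[of a b "poly p" x] assms(1,2) cont that by simp
  then have "{a..b} \<subseteq> {x. poly p x = 0}" by auto
  with poly_roots_finite[OF \<open>p \<noteq> 0\<close>] assms(1) show False
    using finite_subset infinite_Icc by blast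
qed

lemma integral_poly_neq_0_if_even_order_roots:
  fixes p :: "real poly"
  assumes "a < b" and "p \<noteq> 0" and "\<forall>r\<in>{a<..<b}. poly p r = 0 \<longrightarrow> even (order r p)"
  shows "integral {a..b} (poly p) \<noteq> 0"
proof
  assume int0: "integral {a..b} (poly p) = 0"
  consider "\<forall>x\<in>{a<..<b}. poly p x \<ge> 0" | "\<forall>x\<in>{a<..<b}. poly (- p) x \<ge> 0"
    using poly_sign_const_if_even_order_roots[OF assms(2,3)] unfolding poly_minus neg_0_le_iff_le by blast
  then show False
  proof cases
    case 1
    then show False using poly_eq_0_if_nonneg_integral_eq_0[OF assms(1) 1 int0] assms(2) by simp
  next
    case 2
    have "poly (- p) = (\<lambda>x. - poly p x)" by (rule ext) (rule poly_minus)
    then have "integral {a..b} (poly (- p)) = 0" by (simp add: integral_neg int0)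
    then show False using poly_eq_0_if_nonneg_integral_eq_0[OF assms(1) 2] assms(2) by simp
  qed
qed

text \<open>The roots of odd order in \<open>(-1, 1)\<close> are at least \<open>n\<close> in number: otherwise the product of the
  corresponding linear factors would be orthogonal to \<open>P\<^sub>n\<close> although \<open>P\<^sub>n\<close> times it does not change
  sign on \<open>(-1, 1)\<close>.\<close>
lemma card_legendre_roots: "card {x. poly (legendre n) x = 0} = n"
proof -
  define P where "P = legendre n"
  define Z where "Z = {r\<in>{-1<..<1}. poly P r = 0 \<and> odd (order r P)}"
  define q where "q = (\<Prod>z\<in>Z. [:-z,1::real:])"
  have fin: "finite {x. poly P x = 0}" unfolding P_def by (simp add: poly_roots_finite)
  have Z_roots: "Z \<subseteq> {x. poly P x = 0}" unfolding Z_def by auto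
  with fin have finZ: "finite Z" by (rule finite_subset[rotated])
  have "n \<le> card Z"
  proof (rule ccontr)
    assume "\<not> n \<le> card Z"
    then have "degree q < n" unfolding q_def by (simp add: degree_prod_sum_eq finZ)
    moreover have "poly (P * q) = (\<lambda>x. poly P x * poly q x)" by auto
    ultimately have "integral {-1..1} (poly (P * q)) = 0"
      using legendre_orthogonal[of q n] by (simp add: P_def)
    moreover have nz: "P * q \<noteq> 0" unfolding P_def q_def using finZ by simp
    moreover have "\<forall>r\<in>{-1<..<1}. poly (P * q) r = 0 \<longrightarrow> even (order r (P * q))"
    proof (intro ballI impI)
      fix r :: real assume "r \<in> {-1<..<1}" "poly (P * q) r = 0"
      moreover have "poly q r \<noteq> 0" if "r \<notin> Z" using that finZ by (simp add: q_def poly_prod)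
      moreover have "order r (P * q) = order r P + (if r \<in> Z then 1 else 0)"
        using order_mult[OF nz, of r] order_prod_linear_factors[OF finZ, of r] by (simp add: q_def)
      ultimately show "even (order r (P * q))" unfolding Z_def by auto
    qed
    ultimately show False using integral_poly_neq_0_if_even_order_roots[of "-1" 1 "P * q"] by simp
  qed
  moreover have "card {x. poly P x = 0} \<le> n"
    using card_poly_roots_bound[of P] by (simp add: P_def)
  moreover have "card Z \<le> card {x. poly P x = 0}" using card_mono[OF fin Z_roots] .
  ultimately show ?thesis unfolding P_def by simp
qed

lemma gauss_tau_bij: "bij_betw (gauss_tau N) {1..N} {x. poly (legendre N) x = 0}"
proof -
  define xs where "xs = sorted_list_of_set {x. poly (legendre N) x = 0}"
  have fin: "finite {x. poly (legendre N) x = 0}" by (simp add: poly_roots_finite)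
  have "bij_betw (\<lambda>i. i - 1) {1..N} {..<N}"
    by (rule bij_betw_byWitness[where f' = Suc]) auto
  moreover have "bij_betw ((!) xs) {..<N} {x. poly (legendre N) x = 0}"
    using fin card_legendre_roots[of N] by (intro bij_betw_nth) (simp_all add: xs_def)
  ultimately have "bij_betw (\<lambda>i. xs ! (i - 1)) {1..N} {x. poly (legendre N) x = 0}"
    using bij_betw_trans by (fastforce simp: o_def)
  then show ?thesis
    by (rule bij_betw_cong[THEN iffD1, rotated]) (simp add: gauss_tau_def xs_def)
qed

lemma poly_lagrange_basis_node:
  assumes "finite K" "inj_on (gauss_tau N) K" "j \<in> K" "m \<in> K"
  shows "poly (lagrange_basis N K j) (gauss_tau N m) = (if m = j then 1 else 0)"
proof -
  have "poly (lagrange_basis N K j) x = (\<Prod>k\<in>K - {j}. (x - gauss_tau N k) / (gauss_tau N j - gauss_tau N k))"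
    for x
    by (simp add: lagrange_basis_def poly_prod diff_divide_distrib)
  moreover have "gauss_tau N j \<noteq> gauss_tau N k" if "k \<in> K - {j}" for k
    using assms(2,3) that by (auto dest: inj_onD)
  ultimately show ?thesis
    using assms(1,4) by (auto intro!: prod.neutral prod_zero)
qed

lemma degree_lagrange_basis:
  assumes "finite K"
  shows "degree (lagrange_basis N K j) \<le> card (K - {j})"
proof -
  let ?factor = "\<lambda>k. smult (1 / (gauss_tau N j - gauss_tau N k)) [:- gauss_tau N k, 1:]"
  have "degree (lagrange_basis N K j) \<le> sum (degree \<circ> ?factor) (K - {j})"
    unfolding lagrange_basis_def using assms by (intro degree_prod_sum_le) simp
  also have "\<dots> \<le> (\<Sum>k\<in>K - {j}. 1)"
    by (intro sum_mono) (simp add: order_trans[OF degree_smult_le])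
  finally show ?thesis by simp
qed

lemma dvd_if_roots_subset:
  fixes p r :: "'a::field poly"
  assumes "p \<noteq> 0" and "card {x. poly p x = 0} = degree p" and "\<forall>x. poly p x = 0 \<longrightarrow> poly r x = 0"
  shows "p dvd r"
proof (rule ccontr)
  assume "\<not> p dvd r"
  then have nz: "r mod p \<noteq> 0" by (simp add: mod_eq_0_iff_dvd)
  have "poly (r mod p) x = 0" if "poly p x = 0" for x
    using assms(3) that div_mult_mod_eq[of r p] by (metis add_0 mult_zero_right poly_add poly_mult)
  then have "card {x. poly p x = 0} \<le> card {x. poly (r mod p) x = 0}"
    using poly_roots_finite[OF nz] by (intro card_mono) auto
  also have "\<dots> \<le> degree (r mod p)" by (rule card_poly_roots_bound[OF nz])
  also have "\<dots> < degree p" by (rule degree_mod_less'[OF assms(1) nz])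
  finally show False using assms(2) by simp
qed

text \<open>Gauss quadrature is exact in degree \<open>2N - 1\<close>, so \<open>\<omega>\<^sub>i = \<integral> L\<^sub>i = \<integral> L\<^sub>i\<^sup>2\<close>.\<close>
lemma gauss_weight_eq_integral_square:
  assumes i: "i \<in> {1..N}"
  shows "gauss_weight N i = integral {-1..1} (\<lambda>x. poly (lagrange_basis N {1..N} i) x ^ 2)"
proof -
  define L where "L = lagrange_basis N {1..N} i"
  define P where "P = legendre N"
  have node: "poly L (gauss_tau N m) = (if m = i then 1 else 0)" if "m \<in> {1..N}" for m
    unfolding L_def using gauss_tau_bij[of N] i that
    by (intro poly_lagrange_basis_node) (auto simp: bij_betw_def)
  have "P dvd L * L - L"
  proof (rule dvd_if_roots_subset)
    show "\<forall>x. poly P x = 0 \<longrightarrow> poly (L * L - L) x = 0"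
    proof (intro allI impI)
      fix x assume "poly P x = 0"
      then have "x \<in> gauss_tau N ` {1..N}"
        using gauss_tau_bij[of N] by (simp add: P_def bij_betw_def)
      then obtain m where "m \<in> {1..N}" "x = gauss_tau N m" by blast
      then show "poly (L * L - L) x = 0" using node by simp
    qed
  qed (simp_all add: P_def card_legendre_roots)
  then obtain d where d: "L * L - L = P * d" by (rule dvdE)
  have "degree L \<le> N - 1" unfolding L_def using degree_lagrange_basis[of "{1..N}" N i] i by simp
  then have "degree (L * L - L) \<le> 2 * N - 2"
    by (intro degree_diff_le order_trans[OF degree_mult_le]) auto
  then have "degree d < N"
    using i by (cases "d = 0") (auto simp: d P_def degree_mult_eq)
  then have "integral {-1..1} (\<lambda>x. poly (L * L - L) x) = 0"
    using legendre_orthogonal[of d N] by (simp add: d P_def)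
  then have "integral {-1..1} (\<lambda>x. poly L x ^ 2) = integral {-1..1} (poly L)"
    by (simp add: power2_eq_square integral_diff integrable_continuous_interval continuous_intros)
  then show ?thesis by (simp add: gauss_weight_def L_def)
qed

lemma gauss_weight_pos:
  assumes i: "i \<in> {1..N}"
  shows "gauss_weight N i > 0"
proof -
  define L where "L = lagrange_basis N {1..N} i"
  have "poly L (gauss_tau N i) = 1"
    unfolding L_def using gauss_tau_bij[of N] i
    by (subst poly_lagrange_basis_node) (auto simp: bij_betw_def)
  then have "L * L \<noteq> 0" by auto
  then have "integral {-1..1} (poly (L * L)) \<noteq> 0"
    using poly_eq_0_if_nonneg_integral_eq_0[of "-1" 1 "L * L"] by auto
  moreover have "integral {-1..1} (poly (L * L)) \<ge> 0"
    by (rule integral_nonneg) (auto intro!: integrable_continuous_interval continuous_intros)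
  moreover have "poly (L * L) = (\<lambda>x. poly L x ^ 2)" by (auto simp: power2_eq_square)
  ultimately show ?thesis
    using gauss_weight_eq_integral_square[OF i] by (simp add: L_def)
qed

section \<open>Positive definiteness from the spectrum\<close>

lemma inner_transpose_mult: "x \<bullet> (transpose A *v y) = y \<bullet> (A *v x)"
  for A :: "real^'a^'b"
  by (subst inner_commute) (simp add: dot_lmul_matrix)

lemma linear_coeff_eq_0_if_quadratic_nonneg:
  fixes b c :: real
  assumes "c \<ge> 0" and "\<And>t. 2 * t * b + t\<^sup>2 * c \<ge> 0"
  shows "b = 0"
proof (rule ccontr)
  assume "b \<noteq> 0"
  define t where "t = - b / (c + 1)"
  have "c + 1 \<noteq> 0" using assms(1) by simp
  then have "2 * t * b + t\<^sup>2 * c = - b\<^sup>2 * (c + 2) / (c + 1)\<^sup>2"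
    unfolding t_def by (simp add: divide_simps) (simp add: algebra_simps power2_eq_square)
  also have "\<dots> < 0" using \<open>b \<noteq> 0\<close> assms(1) by (simp add: divide_neg_pos)
  finally show False using assms(2)[of t] by simp
qed

lemma eigenvector_if_min_rayleigh:
  fixes M :: "real^'k^'k"
  assumes sym: "transpose M = M" and vv: "v \<bullet> v = 1"
    and lower: "\<And>x. x \<bullet> (M *v x) \<ge> (v \<bullet> (M *v v)) * (x \<bullet> x)"
  shows "M *v v = (v \<bullet> (M *v v)) *\<^sub>R v"
proof -
  define q where "q x = x \<bullet> (M *v x)" for x
  define \<mu> where "\<mu> = q v"
  define w where "w = M *v v - \<mu> *\<^sub>R v"
  \<comment> \<open>Along \<open>v + t w\<close> the coefficient of \<open>t\<close> is \<open>2 w \<bullet> w\<close>, by symmetry of \<open>M\<close> and \<open>v \<bullet> v = 1\<close>.\<close>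
  have expand: "q (v + t *\<^sub>R w) - \<mu> * ((v + t *\<^sub>R w) \<bullet> (v + t *\<^sub>R w))
      = 2 * t * (w \<bullet> w) + t\<^sup>2 * (q w - \<mu> * (w \<bullet> w))" for t
    using vv inner_transpose_mult[of w M v] sym
    by (simp add: q_def \<mu>_def w_def matrix_vector_right_distrib matrix_vector_mult_scaleR inner_add_left
        inner_add_right inner_diff_left inner_diff_right inner_commute power2_eq_square algebra_simps)
  have "2 * t * (w \<bullet> w) + t\<^sup>2 * (q w - \<mu> * (w \<bullet> w)) \<ge> 0" for t
    using lower[of "v + t *\<^sub>R w"] expand[of t] by (simp add: q_def \<mu>_def)
  moreover have "q w - \<mu> * (w \<bullet> w) \<ge> 0" using lower[of w] by (simp add: q_def \<mu>_def)
  ultimately have "w \<bullet> w = 0" by (intro linear_coeff_eq_0_if_quadratic_nonneg)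
  then show ?thesis by (simp add: w_def \<mu>_def q_def)
qed

text \<open>The minimum of the quadratic form on the unit sphere is an eigenvalue (Rayleigh).\<close>
lemma symmetric_matrix_min_eigenvalue:
  fixes M :: "real^'k^'k"
  assumes "transpose M = M"
  obtains \<mu> where "is_eigenvalue M \<mu>" and "\<And>x. x \<bullet> (M *v x) \<ge> \<mu> * (x \<bullet> x)"
proof -
  define q where "q x = x \<bullet> (M *v x)" for x
  have "sphere (0::real^'k) 1 \<noteq> {}"
    using vector_choose_size[of 1] by (auto simp: sphere_def dist_norm)
  moreover have "continuous_on (sphere 0 1) q" unfolding q_def by (intro continuous_intros)
  ultimately obtain v where v: "v \<in> sphere 0 1" and min: "\<forall>y\<in>sphere 0 1. q v \<le> q y"
    using continuous_attains_inf[OF compact_sphere] by blast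
  have vv: "v \<bullet> v = 1" using v by (simp add: dot_square_norm)
  have lower: "q x \<ge> q v * (x \<bullet> x)" for x
  proof (cases "x = 0")
    case True
    then show ?thesis by (simp add: q_def)
  next
    case False
    define u where "u = (1 / norm x) *\<^sub>R x"
    have "u \<in> sphere 0 1" using False by (simp add: u_def)
    then have "q v \<le> q u" using min by simp
    moreover have "q x = (norm x)\<^sup>2 * q u" "x \<bullet> x = (norm x)\<^sup>2"
      using False by (simp_all add: u_def q_def matrix_vector_mult_scaleR power2_eq_square dot_square_norm)
    ultimately show ?thesis by (simp add: mult.commute mult_right_mono)
  qed
  have "v \<noteq> 0" using vv by auto
  moreover have "M *v v = q v *\<^sub>R v"
    using eigenvector_if_min_rayleigh[OF assms vv] lower by (simp add: q_def)
  ultimately have "is_eigenvalue M (q v)" unfolding is_eigenvalue_def by blast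
  then show ?thesis using that lower by (simp add: q_def)
qed

lemma quadratic_form_pos_if_eigenvalues_pos:
  fixes M :: "real^'k^'k"
  assumes "transpose M = M" and "\<forall>\<mu>. is_eigenvalue M \<mu> \<longrightarrow> \<mu> > 0" and "v \<noteq> 0"
  shows "v \<bullet> (M *v v) > 0"
proof -
  obtain \<mu> where "is_eigenvalue M \<mu>" "\<And>x. x \<bullet> (M *v x) \<ge> \<mu> * (x \<bullet> x)"
    using symmetric_matrix_min_eigenvalue[OF assms(1)] by blast
  moreover have "v \<bullet> v > 0" using assms(3) by simp
  ultimately show ?thesis using assms(2) by (meson less_le_trans mult_pos_pos)
qed

definition vec_join :: "real^'n \<Rightarrow> real^'m \<Rightarrow> real^('n + 'm)" where
  "vec_join x u = (\<chi> i. case i of Inl a \<Rightarrow> x $ a | Inr b \<Rightarrow> u $ b)"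

lemma vec_join_eq_0_iff: "vec_join x u = 0 \<longleftrightarrow> x = 0 \<and> u = 0"
  by (auto simp: vec_join_def vec_eq_iff split: sum.splits)

lemma transpose_block_QSR:
  assumes "transpose Q = Q" and "transpose R = R"
  shows "transpose (block_QSR Q S R) = block_QSR Q S R"
proof -
  have "transpose Q $ a $ b = Q $ b $ a" "transpose R $ c $ d = R $ d $ c" for a b c d
    by (simp_all add: transpose_def)
  then have "Q $ a $ b = Q $ b $ a" "R $ c $ d = R $ d $ c" for a b c d
    using assms by simp_all
  then show ?thesis
    by (auto simp: vec_eq_iff transpose_def block_QSR_def split: sum.splits)
qed

definition hessian_form :: "real^'n^'n \<Rightarrow> real^'m^'n \<Rightarrow> real^'m^'m \<Rightarrow> real^'n \<Rightarrow> real^'m \<Rightarrow> real" where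
  "hessian_form Q S R x u = x \<bullet> (Q *v x) + x \<bullet> (S *v u) + u \<bullet> (transpose S *v x) + u \<bullet> (R *v u)"

lemma quadratic_form_block_QSR:
  fixes x :: "real^'n" and u :: "real^'m"
  shows "vec_join x u \<bullet> (block_QSR Q S R *v vec_join x u) = hessian_form Q S R x u"
proof -
  have sum_Plus: "(\<Sum>i\<in>UNIV. f i) = (\<Sum>a\<in>UNIV. f (Inl a)) + (\<Sum>b\<in>UNIV. f (Inr b))"
    for f :: "'n + 'm \<Rightarrow> real"
    by (subst UNIV_Plus_UNIV[symmetric], subst sum.Plus) (auto simp: o_def)
  show ?thesis
    unfolding vec_join_def inner_vec_def matrix_vector_mult_def block_QSR_def hessian_form_def
    by (simp add: sum_Plus transpose_def sum.distrib sum_distrib_left algebra_simps)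
qed

lemma hessian_form_pos:
  assumes "transpose Q = Q" and "transpose R = R"
    and "\<forall>\<mu>. is_eigenvalue (block_QSR Q S R) \<mu> \<longrightarrow> \<mu> > 0" and "x \<noteq> 0 \<or> u \<noteq> 0"
  shows "hessian_form Q S R x u > 0"
  using quadratic_form_pos_if_eigenvalues_pos[OF transpose_block_QSR[OF assms(1,2)] assms(3),
      of "vec_join x u"] assms(4)
  by (simp add: vec_join_eq_0_iff quadratic_form_block_QSR)

section \<open>An \<open>\<ell>\<^sup>1\<close> contraction\<close>

text \<open>\<open>\<ell>\<^sup>1\<close> is the vector norm whose induced norm of \<open>A\<^sup>T\<close> is the row-sum norm of \<open>A\<close>.\<close>
definition l1_norm :: "real^'a \<Rightarrow> real" where
  "l1_norm v = (\<Sum>a\<in>UNIV. \<bar>v $ a\<bar>)"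

lemma l1_norm_nonneg: "l1_norm v \<ge> 0"
  by (simp add: l1_norm_def sum_nonneg)

lemma l1_norm_eq_0_iff: "l1_norm v = 0 \<longleftrightarrow> v = 0"
  by (simp add: l1_norm_def sum_nonneg_eq_0_iff vec_eq_iff)

lemma l1_norm_sum_scaleR_le:
  assumes "finite I"
  shows "l1_norm (\<Sum>i\<in>I. c i *\<^sub>R v i) \<le> (\<Sum>i\<in>I. \<bar>c i\<bar> * l1_norm (v i))"
proof -
  have "l1_norm (\<Sum>i\<in>I. c i *\<^sub>R v i) = (\<Sum>a\<in>UNIV. \<bar>\<Sum>i\<in>I. c i * v i $ a\<bar>)"
    by (simp add: l1_norm_def sum_component)
  also have "\<dots> \<le> (\<Sum>a\<in>UNIV. \<Sum>i\<in>I. \<bar>c i\<bar> * \<bar>v i $ a\<bar>)"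
    by (intro sum_mono order_trans[OF sum_abs]) (simp add: abs_mult)
  also have "\<dots> = (\<Sum>i\<in>I. \<bar>c i\<bar> * l1_norm (v i))"
    unfolding l1_norm_def by (subst sum.swap) (simp add: sum_distrib_left)
  finally show ?thesis .
qed

lemma inf_norm_nonneg: "inf_norm M \<ge> 0"
  unfolding inf_norm_def by (rule order_trans[OF _ Max_ge[of _ "\<Sum>j\<in>UNIV. \<bar>M $ i $ j\<bar>"]])
    (auto intro: sum_nonneg)

lemma l1_norm_transpose_mult_le:
  fixes A :: "real^'a^'a"
  shows "l1_norm (transpose A *v v) \<le> inf_norm A * l1_norm v"
proof -
  have row: "(\<Sum>b\<in>UNIV. \<bar>A $ a $ b\<bar>) \<le> inf_norm A" for a
    unfolding inf_norm_def by (rule Max_ge) auto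
  have "l1_norm (transpose A *v v) = (\<Sum>b\<in>UNIV. \<bar>\<Sum>a\<in>UNIV. v $ a * A $ a $ b\<bar>)"
    by (simp add: l1_norm_def vector_matrix_mult_def)
  also have "\<dots> \<le> (\<Sum>b\<in>UNIV. \<Sum>a\<in>UNIV. \<bar>v $ a\<bar> * \<bar>A $ a $ b\<bar>)"
    by (intro sum_mono order_trans[OF sum_abs]) (simp add: abs_mult)
  also have "\<dots> = (\<Sum>a\<in>UNIV. \<bar>v $ a\<bar> * (\<Sum>b\<in>UNIV. \<bar>A $ a $ b\<bar>))"
    by (subst sum.swap) (simp add: sum_distrib_left)
  also have "\<dots> \<le> (\<Sum>a\<in>UNIV. \<bar>v $ a\<bar> * inf_norm A)"
    by (intro sum_mono mult_left_mono row) simp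
  also have "\<dots> = inf_norm A * l1_norm v"
    by (simp add: l1_norm_def sum_distrib_left mult.commute)
  finally show ?thesis .
qed

lemma eq_0_if_l1_contraction:
  fixes M :: "'i \<Rightarrow> real^'n" and A :: "'i \<Rightarrow> real^'n^'n"
  assumes "finite I"
    and M: "\<forall>k\<in>I. M k = (\<Sum>i\<in>I. E i k *\<^sub>R (transpose (A i) *v M i))"
    and A: "\<forall>i\<in>I. inf_norm (A i) \<le> a" and E: "\<forall>i\<in>I. (\<Sum>k\<in>I. \<bar>E i k\<bar>) \<le> e"
    and "a * e < 1"
  shows "\<forall>k\<in>I. M k = 0"
proof -
  have contract: "l1_norm (transpose (A i) *v M i) \<le> a * l1_norm (M i)" if "i \<in> I" for i
    using l1_norm_transpose_mult_le[of "A i" "M i"] A that l1_norm_nonneg[of "M i"]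
    by (meson mult_right_mono order_trans)
  have "(\<Sum>k\<in>I. l1_norm (M k)) \<le> (\<Sum>k\<in>I. \<Sum>i\<in>I. \<bar>E i k\<bar> * (a * l1_norm (M i)))"
  proof (intro sum_mono)
    fix k assume "k \<in> I"
    then have "l1_norm (M k) \<le> (\<Sum>i\<in>I. \<bar>E i k\<bar> * l1_norm (transpose (A i) *v M i))"
      using M l1_norm_sum_scaleR_le[OF \<open>finite I\<close>] by simp
    also have "\<dots> \<le> (\<Sum>i\<in>I. \<bar>E i k\<bar> * (a * l1_norm (M i)))"
      using contract by (intro sum_mono mult_left_mono) auto
    finally show "l1_norm (M k) \<le> \<dots>" .
  qed
  also have "\<dots> = (\<Sum>i\<in>I. (\<Sum>k\<in>I. \<bar>E i k\<bar>) * (a * l1_norm (M i)))"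
    by (subst sum.swap) (simp add: sum_distrib_right)
  also have "\<dots> \<le> (\<Sum>i\<in>I. e * (a * l1_norm (M i)))"
    using E A order_trans[OF inf_norm_nonneg]
    by (intro sum_mono mult_right_mono) (auto intro!: mult_nonneg_nonneg l1_norm_nonneg)
  also have "\<dots> = (a * e) * (\<Sum>i\<in>I. l1_norm (M i))"
    by (simp add: sum_distrib_left mult_ac)
  finally have "(1 - a * e) * (\<Sum>k\<in>I. l1_norm (M k)) \<le> 0"
    by (simp add: algebra_simps)
  moreover have "(\<Sum>k\<in>I. l1_norm (M k)) \<ge> 0" by (intro sum_nonneg l1_norm_nonneg)
  ultimately have "(\<Sum>k\<in>I. l1_norm (M k)) = 0"
    using \<open>a * e < 1\<close> by (simp add: mult_le_0_iff)
  then show ?thesis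
    using sum_nonneg_eq_0_iff[OF \<open>finite I\<close>, of "\<lambda>k. l1_norm (M k)"]
    by (simp add: l1_norm_nonneg l1_norm_eq_0_iff)
qed

section \<open>The kernel of the linearized map\<close>

lemma Ddag_weighted:
  assumes "i \<in> {1..N}" "j \<in> {1..N}"
  shows "gauss_weight N i * Ddag N i j = - (gauss_weight N j * Dmat N j i)"
  using assms gauss_weight_pos[of i N] by (simp add: Ddag_def)

lemma Ddag_weighted_last:
  assumes "i \<in> {1..N}"
  shows "gauss_weight N i * Ddag N i (N + 1) = (\<Sum>l=1..N. gauss_weight N l * Dmat N l i)"
  using assms gauss_weight_pos[of i N] by (simp add: Ddag_def sum_distrib_left sum_negf)

text \<open>Discrete integration by parts: \<open>D\<^sup>\<dagger>\<close> is the adjoint of \<open>D\<close> for the quadrature inner product,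
  up to the boundary term at \<open>\<tau> = 1\<close>.\<close>
lemma Ddag_summation_by_parts:
  fixes X L a :: "nat \<Rightarrow> real^'n"
  assumes D: "\<forall>i\<in>{1..N}. (\<Sum>j=1..N. Dmat N i j *\<^sub>R X j) = a i"
    and quad: "X (N + 1) = (\<Sum>j=1..N. gauss_weight N j *\<^sub>R a j)"
  shows "(\<Sum>i=1..N. gauss_weight N i * (X i \<bullet> (\<Sum>j=1..N+1. Ddag N i j *\<^sub>R L j)))
       = X (N + 1) \<bullet> L (N + 1) - (\<Sum>j=1..N. gauss_weight N j * (L j \<bullet> a j))"
proof -
  let ?w = "gauss_weight N"
  have "(\<Sum>i=1..N. ?w i * (X i \<bullet> (\<Sum>j=1..N+1. Ddag N i j *\<^sub>R L j)))
      = (\<Sum>i=1..N. \<Sum>j=1..N. (?w i * Ddag N i j) * (X i \<bullet> L j))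
        + (\<Sum>i=1..N. (?w i * Ddag N i (N + 1)) * (X i \<bullet> L (N + 1)))"
    by (simp add: inner_sum_right inner_add_right sum.distrib sum_distrib_left algebra_simps)
  also have "(\<Sum>i=1..N. \<Sum>j=1..N. (?w i * Ddag N i j) * (X i \<bullet> L j))
      = (\<Sum>i=1..N. \<Sum>j=1..N. - (?w j * Dmat N j i) * (X i \<bullet> L j))"
    by (intro sum.cong refl) (simp add: Ddag_weighted)
  also have "\<dots> = - (\<Sum>j=1..N. ?w j * (L j \<bullet> (\<Sum>i=1..N. Dmat N j i *\<^sub>R X i)))"
    by (subst sum.swap) (simp add: inner_sum_right sum_distrib_left sum_negf inner_commute mult.assoc)
  also have "(\<Sum>i=1..N. (?w i * Ddag N i (N + 1)) * (X i \<bullet> L (N + 1)))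
      = (\<Sum>i=1..N. (\<Sum>l=1..N. ?w l * Dmat N l i) * (X i \<bullet> L (N + 1)))"
    using Ddag_weighted_last by (intro sum.cong refl) simp
  also have "\<dots> = (\<Sum>l=1..N. ?w l * ((\<Sum>i=1..N. Dmat N l i *\<^sub>R X i) \<bullet> L (N + 1)))"
    by (simp add: sum_distrib_right sum_distrib_left inner_sum_left mult.assoc) (rule sum.swap)
  also have "\<dots> = X (N + 1) \<bullet> L (N + 1)"
    using D unfolding quad by (simp add: inner_sum_left)
  finally show ?thesis
    using D by simp
qed

lemma kkt_energy_identity:
  assumes dyn: "\<forall>i\<in>{1..N}. (\<Sum>j=1..N. Dmat N i j *\<^sub>R X j) = A i *v X i + B i *v U i"
    and quad: "X (N + 1) = (\<Sum>j=1..N. gauss_weight N j *\<^sub>R (A j *v X j + B j *v U j))"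
    and ctrl: "\<forall>i\<in>{1..N}. transpose (S i) *v X i + R i *v U i + transpose (B i) *v L i = 0"
    and costate: "\<forall>i\<in>{1..N}.
      (\<Sum>j=1..N+1. Ddag N i j *\<^sub>R L j) + transpose (A i) *v L i + Q i *v X i + S i *v U i = 0"
  shows "(\<Sum>i=1..N. gauss_weight N i * hessian_form (Q i) (S i) (R i) (X i) (U i))
       = - (X (N + 1) \<bullet> L (N + 1))"
proof -
  let ?w = "gauss_weight N" and ?DL = "\<lambda>i. \<Sum>j=1..N+1. Ddag N i j *\<^sub>R L j"
  define a where "a i = A i *v X i + B i *v U i" for i
  have pointwise: "hessian_form (Q i) (S i) (R i) (X i) (U i) = - (X i \<bullet> ?DL i) - L i \<bullet> a i"
    if "i \<in> {1..N}" for i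
  proof -
    have "X i \<bullet> (?DL i + transpose (A i) *v L i + Q i *v X i + S i *v U i) = 0"
      "U i \<bullet> (transpose (S i) *v X i + R i *v U i + transpose (B i) *v L i) = 0"
      using costate ctrl that by simp_all
    then show ?thesis
      using inner_transpose_mult[of "X i" "A i" "L i"] inner_transpose_mult[of "U i" "B i" "L i"]
      by (simp add: hessian_form_def a_def inner_add_right algebra_simps)
  qed
  have "(\<Sum>i=1..N. ?w i * hessian_form (Q i) (S i) (R i) (X i) (U i))
      = (\<Sum>i=1..N. - (?w i * (X i \<bullet> ?DL i)) - ?w i * (L i \<bullet> a i))"
    by (intro sum.cong refl) (simp add: pointwise algebra_simps)
  also have "\<dots> = - (\<Sum>i=1..N. ?w i * (X i \<bullet> ?DL i)) - (\<Sum>i=1..N. ?w i * (L i \<bullet> a i))"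
    by (simp add: sum_subtractf sum_negf)
  also have "\<dots> = - (X (N + 1) \<bullet> L (N + 1))"
    using Ddag_summation_by_parts[of N X a L] dyn quad by (simp add: a_def)
  finally show ?thesis .
qed

lemma states_controls_vanish:
  assumes pos: "\<forall>i\<in>{1..N}. \<forall>x u. x \<noteq> 0 \<or> u \<noteq> 0 \<longrightarrow> hessian_form (Q i) (S i) (R i) x u > 0"
    and energy: "(\<Sum>i=1..N. gauss_weight N i * hessian_form (Q i) (S i) (R i) (X i) (U i)) \<le> 0"
  shows "\<forall>i\<in>{1..N}. X i = 0 \<and> U i = 0"
proof -
  have nonneg: "gauss_weight N i * hessian_form (Q i) (S i) (R i) (X i) (U i) \<ge> 0" if "i \<in> {1..N}" for i
    using pos gauss_weight_pos[OF that] that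
    by (cases "X i = 0 \<and> U i = 0") (auto simp: hessian_form_def less_imp_le)
  have "(\<Sum>i=1..N. gauss_weight N i * hessian_form (Q i) (S i) (R i) (X i) (U i)) = 0"
    using energy nonneg by (meson antisym sum_nonneg)
  then have zero: "gauss_weight N i * hessian_form (Q i) (S i) (R i) (X i) (U i) = 0"
    if "i \<in> {1..N}" for i
    using nonneg that by (subst (asm) sum_nonneg_eq_0_iff) auto
  show ?thesis
  proof (intro ballI, rule ccontr)
    fix i assume i: "i \<in> {1..N}" and "\<not> (X i = 0 \<and> U i = 0)"
    then have "gauss_weight N i * hessian_form (Q i) (S i) (R i) (X i) (U i) > 0"
      using pos gauss_weight_pos[OF i] by simp
    with zero[OF i] show False by linarith
  qed
qed

lemma costates_vanish:
  assumes A: "\<forall>i\<in>{1..N}. inf_norm (A i) \<le> a"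
    and E_inv: "\<forall>i\<in>{1..N}. \<forall>j\<in>{1..N}. (\<Sum>k=1..N. Dmat N i k * E k j) = (if i = j then 1 else 0)"
    and E_norm: "\<forall>i\<in>{1..N}. (\<Sum>j=1..N. \<bar>E i j\<bar>) \<le> e"
    and "a * e < 1"
    and costate: "\<forall>i\<in>{1..N}. (\<Sum>j=1..N+1. Ddag N i j *\<^sub>R L j) + transpose (A i) *v L i = 0"
    and terminal: "L (N + 1) = 0"
  shows "\<forall>i\<in>{1..N}. L i = 0"
proof -
  let ?w = "gauss_weight N"
  define M where "M j = ?w j *\<^sub>R L j" for j
  have adjoint: "(\<Sum>j=1..N. Dmat N j i *\<^sub>R M j) = transpose (A i) *v M i" if i: "i \<in> {1..N}" for i
  proof -
    have "?w i *\<^sub>R ((\<Sum>j=1..N. Ddag N i j *\<^sub>R L j) + transpose (A i) *v L i) = 0"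
      using costate i terminal by simp
    then have "(\<Sum>j=1..N. (?w i * Ddag N i j) *\<^sub>R L j) + transpose (A i) *v M i = 0"
      by (simp add: M_def scaleR_add_right scaleR_sum_right matrix_vector_mult_scaleR)
    moreover have "(\<Sum>j=1..N. (?w i * Ddag N i j) *\<^sub>R L j) = (\<Sum>j=1..N. - (Dmat N j i *\<^sub>R M j))"
      using i by (intro sum.cong refl) (simp add: Ddag_weighted M_def)
    ultimately show ?thesis
      by (simp add: sum_negf algebra_simps)
  qed
  have fixpoint: "\<forall>k\<in>{1..N}. M k = (\<Sum>i=1..N. E i k *\<^sub>R (transpose (A i) *v M i))"
  proof
    fix k assume k: "k \<in> {1..N}"
    have "(\<Sum>i=1..N. E i k *\<^sub>R (transpose (A i) *v M i))
        = (\<Sum>i=1..N. E i k *\<^sub>R (\<Sum>j=1..N. Dmat N j i *\<^sub>R M j))"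
      using adjoint by (intro sum.cong refl) simp
    also have "\<dots> = (\<Sum>j=1..N. (\<Sum>i=1..N. Dmat N j i * E i k) *\<^sub>R M j)"
      by (simp add: scaleR_sum_right scaleR_sum_left) (subst sum.swap, simp add: mult.commute)
    also have "\<dots> = (\<Sum>j=1..N. if j = k then M j else 0)"
      using E_inv k by (intro sum.cong refl) simp
    also have "\<dots> = M k"
      using k by (simp add: sum.delta)
    finally show "M k = (\<Sum>i=1..N. E i k *\<^sub>R (transpose (A i) *v M i))" by simp
  qed
  have "\<forall>k\<in>{1..N}. M k = 0"
    by (rule eq_0_if_l1_contraction[OF _ fixpoint A E_norm \<open>a * e < 1\<close>]) simp
  then show ?thesis
    using gauss_weight_pos by (fastforce simp: M_def)
qed

lemma gradT_eq_0D:
  assumes "gradT N A B Q S R T (X, U, L) = 0"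
  shows "\<forall>i\<in>{1..N}. (\<Sum>j=1..N. Dmat N i j *\<^sub>R X j) = A i *v X i + B i *v U i"
    and "X (N + 1) = (\<Sum>j=1..N. gauss_weight N j *\<^sub>R (A j *v X j + B j *v U j))"
    and "\<forall>i\<in>{1..N}. transpose (S i) *v X i + R i *v U i + transpose (B i) *v L i = 0"
    and "\<forall>i\<in>{1..N}.
      (\<Sum>j=1..N+1. Ddag N i j *\<^sub>R L j) + transpose (A i) *v L i + Q i *v X i + S i *v U i = 0"
    and "L (N + 1) = T *v X (N + 1)"
proof -
  have F: "fst (gradT N A B Q S R T (X, U, L)) i = 0" "fst (snd (gradT N A B Q S R T (X, U, L))) i = 0"
    "snd (snd (gradT N A B Q S R T (X, U, L))) i = 0" for i
    using assms by (simp_all add: zero_prod_def)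
  show "X (N + 1) = (\<Sum>j=1..N. gauss_weight N j *\<^sub>R (A j *v X j + B j *v U j))"
    using F(1)[of "N + 1"] by (simp add: gradT_def)
  show "L (N + 1) = T *v X (N + 1)"
    using F(3)[of "N + 1"] by (simp add: gradT_def)
  have rows: "(\<Sum>j=1..N. Dmat N i j *\<^sub>R X j) - A i *v X i - B i *v U i = 0"
    "transpose (S i) *v X i + R i *v U i + transpose (B i) *v L i = 0"
    "(\<Sum>j=1..N+1. Ddag N i j *\<^sub>R L j) + transpose (A i) *v L i + Q i *v X i + S i *v U i = 0"
    if "i \<in> {1..N}" for i
    using F(1)[of i] F(2)[of i] F(3)[of i] that by (simp_all add: gradT_def)
  then show "\<forall>i\<in>{1..N}. (\<Sum>j=1..N. Dmat N i j *\<^sub>R X j) = A i *v X i + B i *v U i"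
    and "\<forall>i\<in>{1..N}. transpose (S i) *v X i + R i *v U i + transpose (B i) *v L i = 0"
    and "\<forall>i\<in>{1..N}.
      (\<Sum>j=1..N+1. Ddag N i j *\<^sub>R L j) + transpose (A i) *v L i + Q i *v X i + S i *v U i = 0"
    by (simp_all add: diff_diff_eq)
qed

lemma gradT_kernel_trivial:
  assumes pos: "\<forall>i\<in>{1..N}. \<forall>x u. x \<noteq> 0 \<or> u \<noteq> 0 \<longrightarrow> hessian_form (Q i) (S i) (R i) x u > 0"
    and T: "\<forall>x. x \<bullet> (T *v x) \<ge> 0"
    and A: "\<forall>i\<in>{1..N}. inf_norm (A i) \<le> a"
    and E_inv: "\<forall>i\<in>{1..N}. \<forall>j\<in>{1..N}. (\<Sum>k=1..N. Dmat N i k * E k j) = (if i = j then 1 else 0)"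
    and E_norm: "\<forall>i\<in>{1..N}. (\<Sum>j=1..N. \<bar>E i j\<bar>) \<le> e"
    and "a * e < 1"
    and space: "(X, U, L) \<in> kkt_space N"
    and kernel: "gradT N A B Q S R T (X, U, L) = 0"
  shows "(X, U, L) = 0"
proof -
  note eqs = gradT_eq_0D[OF kernel]
  have "(\<Sum>i=1..N. gauss_weight N i * hessian_form (Q i) (S i) (R i) (X i) (U i)) \<le> 0"
    using kkt_energy_identity[OF eqs(1-4)] eqs(5) T by simp
  then have XU: "\<forall>i\<in>{1..N}. X i = 0 \<and> U i = 0"
    by (rule states_controls_vanish[OF pos])
  then have X_last: "X (N + 1) = 0" using eqs(2) by simp
  then have L_last: "L (N + 1) = 0" using eqs(5) by simp
  have "\<forall>i\<in>{1..N}. (\<Sum>j=1..N+1. Ddag N i j *\<^sub>R L j) + transpose (A i) *v L i = 0"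
    using eqs(4) XU by simp
  then have "\<forall>i\<in>{1..N}. L i = 0"
    using costates_vanish[OF A E_inv E_norm \<open>a * e < 1\<close>] L_last by simp
  then show ?thesis
    using space XU X_last L_last
    by (auto simp: kkt_space_def zero_prod_def fun_eq_iff) (metis atLeastAtMost_iff le_SucE)+
qed

section \<open>Bijectivity of the linearized map\<close>

lemma linear_inj_on_imp_image_eq:
  fixes f :: "'a::real_vector \<Rightarrow> 'a"
  assumes lin: "linear f" and "subspace V" and "finite W" and "V \<subseteq> span W"
    and into: "f ` V \<subseteq> V" and inj: "inj_on f V"
  shows "f ` V = V"
proof
  show "f ` V \<subseteq> V" by (rule into)
  obtain B where B: "B \<subseteq> V" "independent B" "V \<subseteq> span B"
    by (rule basis_exists[of V])
  have "finite B" using independent_span_bound[OF assms(3) B(2)] B(1) assms(4) by blast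
  have span_B: "span B = V" using B(1,3) assms(2) by (metis span_minimal subset_antisym)
  have ind: "independent (f ` B)"
    using linear_independent_injective_image[OF lin B(2)] inj span_B by simp
  have card: "card (f ` B) = card B" using card_image inj_on_subset[OF inj B(1)] by blast
  have image: "f ` V = span (f ` B)" using linear_span_image[OF lin, of B] span_B by simp
  show "V \<subseteq> f ` V"
  proof
    fix v assume v: "v \<in> V"
    show "v \<in> f ` V"
    proof (rule ccontr)
      assume "v \<notin> f ` V"
      then have "independent (insert v (f ` B))" using ind image by (simp add: independent_insert)
      moreover have "insert v (f ` B) \<subseteq> span B" using v span_B into B(1) by auto
      ultimately have "card (insert v (f ` B)) \<le> card B"
        using independent_span_bound[OF \<open>finite B\<close>] by blast
      moreover have "v \<notin> f ` B" using \<open>v \<notin> f ` V\<close> B(1) by auto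
      then have "card (insert v (f ` B)) = card B + 1" using card \<open>finite B\<close> by simp
      ultimately show False by simp
    qed
  qed
qed

instantiation "fun" :: (type, real_vector) real_vector
begin

definition scaleR_fun :: "real \<Rightarrow> ('a \<Rightarrow> 'b) \<Rightarrow> 'a \<Rightarrow> 'b" where
  "scaleR_fun c f = (\<lambda>x. c *\<^sub>R f x)"

instance
  by standard (auto simp: scaleR_fun_def fun_eq_iff scaleR_add_right scaleR_add_left)

end

lemma gradT_linear:
  fixes A :: "nat \<Rightarrow> real^'n^'n" and B :: "nat \<Rightarrow> real^'m^'n"
  shows "linear (gradT N A B Q S R T)"
proof (rule linearI)
  fix x y :: "('n, 'm) kkt_vec"
  show "gradT N A B Q S R T (x + y) = gradT N A B Q S R T x + gradT N A B Q S R T y"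
    by (cases x, cases y)
      (simp add: gradT_def fun_eq_iff sum.distrib scaleR_add_right matrix_vector_right_distrib algebra_simps)
next
  fix c :: real and x :: "('n, 'm) kkt_vec"
  show "gradT N A B Q S R T (c *\<^sub>R x) = c *\<^sub>R gradT N A B Q S R T x"
    by (cases x)
      (simp add: gradT_def fun_eq_iff scaleR_fun_def scaleR_sum_right matrix_vector_mult_scaleR algebra_simps)
qed

lemma gradT_kkt_space: "gradT N A B Q S R T ` kkt_space N \<subseteq> kkt_space N"
  unfolding gradT_def kkt_space_def by auto

lemma subspace_kkt_space: "subspace (kkt_space N)"
  unfolding subspace_def kkt_space_def by (auto simp: scaleR_fun_def zero_prod_def)

lemma linear_image_in_span:
  fixes g :: "'a::euclidean_space \<Rightarrow> 'b::real_vector"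
  assumes "linear g" and "g ` Basis \<subseteq> W"
  shows "g v \<in> span W"
  using span_mono[OF assms(2)] linear_span_image[OF assms(1), of Basis] by (auto simp: span_Basis)

lemma sum_fun_upd_zero:
  "finite I \<Longrightarrow> (\<Sum>i\<in>I. 0(i := F i)) = (\<lambda>j. if j \<in> I then F j else (0::'a::comm_monoid_add))"
  by (induction I rule: finite_induct) (auto simp: fun_eq_iff)

lemma kkt_space_finite_span: "\<exists>W. finite W \<and> (kkt_space N :: ('n::finite, 'm::finite) kkt_vec set) \<subseteq> span W"
proof -
  define emb1 :: "nat \<Rightarrow> real^'n \<Rightarrow> ('n, 'm) kkt_vec" where "emb1 i v = (0(i := v), 0, 0)" for i v
  define emb2 :: "nat \<Rightarrow> real^'m \<Rightarrow> ('n, 'm) kkt_vec" where "emb2 i v = (0, 0(i := v), 0)" for i v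
  define emb3 :: "nat \<Rightarrow> real^'n \<Rightarrow> ('n, 'm) kkt_vec" where "emb3 i v = (0, 0, 0(i := v))" for i v
  define W where "W = (\<Union>i\<in>{1..N+1}. emb1 i ` Basis) \<union> (\<Union>i\<in>{1..N}. emb2 i ` Basis)
      \<union> (\<Union>i\<in>{1..N+1}. emb3 i ` Basis)"
  have lin: "linear (emb1 i)" "linear (emb2 i)" "linear (emb3 i)" for i
    by (rule linearI; auto simp: emb1_def emb2_def emb3_def fun_eq_iff scaleR_fun_def)+
  have "kkt_space N \<subseteq> span W"
  proof
    fix x :: "('n, 'm) kkt_vec" assume x: "x \<in> kkt_space N"
    obtain X U L where xe: "x = (X, U, L)" by (cases x)
    have "x = (\<Sum>i\<in>{1..N+1}. emb1 i (X i)) + (\<Sum>i\<in>{1..N}. emb2 i (U i)) + (\<Sum>i\<in>{1..N+1}. emb3 i (L i))"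
      using x unfolding xe kkt_space_def
      by (auto simp: sum_prod emb1_def emb2_def emb3_def sum_fun_upd_zero fun_eq_iff)
    also have "\<dots> \<in> span W"
      by (intro span_add span_sum linear_image_in_span lin) (auto simp: W_def)
    finally show "x \<in> span W" .
  qed
  moreover have "finite W" by (simp add: W_def)
  ultimately show ?thesis by blast
qed

lemma bij_betw_gradT_if_kernel_trivial:
  fixes A :: "nat \<Rightarrow> real^'n^'n" and B :: "nat \<Rightarrow> real^'m^'n"
  assumes "\<And>X U L. (X, U, L) \<in> kkt_space N \<Longrightarrow> gradT N A B Q S R T (X, U, L) = 0 \<Longrightarrow> (X, U, L) = 0"
  shows "bij_betw (gradT N A B Q S R T) (kkt_space N) (kkt_space N)"
proof -
  have inj: "inj_on (gradT N A B Q S R T) (kkt_space N)"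
    unfolding linear_inj_on_iff_eq_0[OF gradT_linear subspace_kkt_space] using assms by auto
  obtain W where "finite W" "(kkt_space N :: ('n, 'm) kkt_vec set) \<subseteq> span W"
    using kkt_space_finite_span by blast
  then show ?thesis
    using linear_inj_on_imp_image_eq[OF gradT_linear subspace_kkt_space _ _ gradT_kkt_space inj] inj
    by (simp add: bij_betw_def)
qed

theorem proposition4p2:
  fixes N :: nat
    and A :: "nat \<Rightarrow> real^'n^'n" and Q :: "nat \<Rightarrow> real^'n^'n"
    and B :: "nat \<Rightarrow> real^'m^'n" and S :: "nat \<Rightarrow> real^'m^'n"
    and R :: "nat \<Rightarrow> real^'m^'m" and T :: "real^'n^'n"
  assumes N: "N \<ge> 1"
    and symQ: "\<forall>i\<in>{1..N}. transpose (Q i) = Q i"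
    and symR: "\<forall>i\<in>{1..N}. transpose (R i) = R i"
    and symT: "transpose T = T"
    and eig: "\<exists>\<alpha>>0. (\<forall>\<mu>. is_eigenvalue T \<mu> \<longrightarrow> \<mu> > \<alpha>)
              \<and> (\<forall>i\<in>{1..N}. \<forall>\<mu>. is_eigenvalue (block_QSR (Q i) (S i) (R i)) \<mu> \<longrightarrow> \<mu> > \<alpha>)"
    and Anorm: "\<forall>i\<in>{1..N}. inf_norm (A i) \<le> 1/4 \<and> inf_norm (transpose (A i)) \<le> 1/4"
    and Dinv: "\<exists>E :: nat \<Rightarrow> nat \<Rightarrow> real.
                 (\<forall>i\<in>{1..N}. \<forall>j\<in>{1..N}. (\<Sum>k=1..N. Dmat N i k * E k j) = (if i = j then 1 else 0))
               \<and> (\<forall>i\<in>{1..N}. \<forall>j\<in>{1..N}. (\<Sum>k=1..N. E i k * Dmat N k j) = (if i = j then 1 else 0))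
               \<and> (\<forall>i\<in>{1..N}. (\<Sum>j=1..N. \<bar>E i j\<bar>) \<le> 2)"
  shows "bij_betw (gradT N A B Q S R T) (kkt_space N) (kkt_space N)"
proof -
  obtain \<alpha> :: real where "\<alpha> > 0" and eig_T: "\<forall>\<mu>. is_eigenvalue T \<mu> \<longrightarrow> \<mu> > \<alpha>"
    and eig_H: "\<forall>i\<in>{1..N}. \<forall>\<mu>. is_eigenvalue (block_QSR (Q i) (S i) (R i)) \<mu> \<longrightarrow> \<mu> > \<alpha>"
    using eig by blast
  obtain E :: "nat \<Rightarrow> nat \<Rightarrow> real"
    where E_inv: "\<forall>i\<in>{1..N}. \<forall>j\<in>{1..N}. (\<Sum>k=1..N. Dmat N i k * E k j) = (if i = j then 1 else 0)"
      and E_norm: "\<forall>i\<in>{1..N}. (\<Sum>j=1..N. \<bar>E i j\<bar>) \<le> 2"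
    using Dinv by blast
  have pos: "\<forall>\<mu>. P \<mu> \<longrightarrow> \<mu> > 0" if "\<forall>\<mu>. P \<mu> \<longrightarrow> \<mu> > \<alpha>" for P
    using that \<open>\<alpha> > 0\<close> by (meson less_trans)
  have T_psd: "\<forall>x. x \<bullet> (T *v x) \<ge> 0"
    using quadratic_form_pos_if_eigenvalues_pos[OF symT pos[OF eig_T]]
    by (metis inner_zero_left less_eq_real_def)
  have H_pos: "\<forall>i\<in>{1..N}. \<forall>x u. x \<noteq> 0 \<or> u \<noteq> 0 \<longrightarrow> hessian_form (Q i) (S i) (R i) x u > 0"
  proof (intro ballI allI impI)
    fix i and x :: "real^'n" and u :: "real^'m"
    assume "i \<in> {1..N}" and "x \<noteq> 0 \<or> u \<noteq> 0"
    with symQ symR eig_H show "hessian_form (Q i) (S i) (R i) x u > 0"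
      by (intro hessian_form_pos pos) auto
  qed
  have A_norm: "\<forall>i\<in>{1..N}. inf_norm (A i) \<le> 1/4" using Anorm by blast
  show ?thesis
    using gradT_kernel_trivial[OF H_pos T_psd A_norm E_inv E_norm]
    by (intro bij_betw_gradT_if_kernel_trivial) simp
qed

end
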